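(* Let $f\in\mathbb R[x_1,\dots,x_n]$ satisfy conditions (C1), (C2), (C3) and let $\lambda_f$ be a map of minimal barycentric coordinates of $f$. If \[ \sum_{\alpha^\star\in D(f)\cap(2\mathbb N_0^n)^c}\frac{|f_{\alpha^\star}|}{\Theta(f,\lambda_f,\alpha^\star)}-\sum_{\alpha^\star\in D(f)\cap 2\mathbb N_0^n}\frac{\min\{0,f_{\alpha^\star}\}}{\Theta(f,\lambda_f,\alpha^\star)}<1, \] then $f$ is coercive on $\mathbb R^n$, i.e. $f(x)\to+\infty$ whenever $\|x\|\to+\infty$.
   Context: Notation: $\mathbb N_0=\mathbb N\cup\{0\}$, $[n]=\{1,\dots,n\}$, $e_i$ the standard unit vectors, $(2\mathbb N_0^n)^c=\mathbb N_0^n\setminus 2\mathbb N_0^n$. Write $f(x)=\sum_{\alpha\in A(f)}f_\alpha x^\alpha$ with $A(f)\subseteq\mathbb N_0^n$ finite and $f_\alpha\neq0$ for $\alpha\in A(f)$. The Newton polytope at infinity is $\mathrm{New}_\infty(f)=\mathrm{conv}(A(f)\cup\{0\})$; $V_0(f)$ is its vertex set (it contains $0$), $V(f)=V_0(f)\setminus\{0\}$, $V_0^c(f)=A(f)\setminus V_0(f)$, $V^c(f)=A(f)\setminus V(f)$. Conditions: (C1) $V(f)\subset 2\mathbb N_0^n$; (C2) $f_\alpha>0$ for all $\alpha\in V(f)$; (C3) for every $i\in[n]$, $V(f)$ contains a vector $2k_ie_i$ with $k_i\in\mathbb N$. Let $\mathcal G(f)$ be the set of nonempty faces $G$ of $\mathrm{New}_\infty(f)$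 with $0\notin G$. An exponent $\alpha\in A(f)$ is gem degenerate if $\alpha\in V^c(f)\cap G$ for some $G\in\mathcal G(f)$; $D(f)$ is the set of gem degenerate exponents. A map of minimal barycentric coordinates of $f$ is a map $\lambda_f:V_0^c(f)\times V_0(f)\to[0,1]$ such that for each $\alpha^\star\in V_0^c(f)$ there is an affinely independent set $W_{\alpha^\star}\subseteq V_0(f)$ with $\lambda_f(\alpha^\star,\alpha)>0$ for $\alpha\in W_{\alpha^\star}$, $\lambda_f(\alpha^\star,\alpha)=0$ for $\alpha\in V_0(f)\setminus W_{\alpha^\star}$, and $\sum_{\alpha\in W_{\alpha^\star}}\lambda_f(\alpha^\star,\alpha)(\alpha,1)=(\alpha^\star,1)$. Write $W_{\alpha^\star}(\lambda_f)=\{\alpha\in V_0(f):\lambda_f(\alpha^\star,\alpha)>0\}$. The circuit number is $\Theta(f,\lambda_f,\alpha^\star)=\prod_{\alpha\in W_{\alpha^\star}(\lambda_f)}\bigl(f_\alpha/\lambda_f(\alpha^\star,\alpha)\bigr)^{\lambda_f(\alpha^\star,\alpha)}$; under (C2),(C3) it is positive for every $\alpha^\star\in D(f)$. *)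

theory Defs
  imports "HOL-Analysis.Analysis"
begin

text \<open>A real polynomial in the variables indexed by the finite type 'n is given by its
coefficient function c on exponent vectors ('n => nat), with finite support A(f).\<close>

definition supp_poly :: "(('n \<Rightarrow> nat) \<Rightarrow> real) \<Rightarrow> ('n \<Rightarrow> nat) set" where
  "supp_poly c = {\<alpha>. c \<alpha> \<noteq> 0}"

definition is_poly :: "(('n \<Rightarrow> nat) \<Rightarrow> real) \<Rightarrow> bool" where
  "is_poly c \<longleftrightarrow> finite (supp_poly c)"

definition peval :: "(('n::finite \<Rightarrow> nat) \<Rightarrow> real) \<Rightarrow> real^'n \<Rightarrow> real" where
  "peval c x = (\<Sum>\<alpha>\<in>supp_poly c. c \<alpha> * (\<Prod>i\<in>UNIV. (x$i) ^ (\<alpha> i)))"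

definition emb :: "('n::finite \<Rightarrow> nat) \<Rightarrow> real^'n" where
  "emb \<alpha> = (\<chi> i. real (\<alpha> i))"

definition newton_inf :: "(('n::finite \<Rightarrow> nat) \<Rightarrow> real) \<Rightarrow> (real^'n) set" where
  "newton_inf c = convex hull (emb ` (supp_poly c \<union> {(\<lambda>_. 0)}))"

definition V0 :: "(('n::finite \<Rightarrow> nat) \<Rightarrow> real) \<Rightarrow> ('n \<Rightarrow> nat) set" where
  "V0 c = {\<alpha> \<in> supp_poly c \<union> {(\<lambda>_. 0)}. emb \<alpha> extreme_point_of newton_inf c}"

definition Vv :: "(('n::finite \<Rightarrow> nat) \<Rightarrow> real) \<Rightarrow> ('n \<Rightarrow> nat) set" where
  "Vv c = V0 c - {(\<lambda>_. 0)}"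

definition V0c :: "(('n::finite \<Rightarrow> nat) \<Rightarrow> real) \<Rightarrow> ('n \<Rightarrow> nat) set" where
  "V0c c = supp_poly c - V0 c"

definition Vc :: "(('n::finite \<Rightarrow> nat) \<Rightarrow> real) \<Rightarrow> ('n \<Rightarrow> nat) set" where
  "Vc c = supp_poly c - Vv c"

definition Gfaces :: "(('n::finite \<Rightarrow> nat) \<Rightarrow> real) \<Rightarrow> (real^'n) set set" where
  "Gfaces c = {G. G face_of newton_inf c \<and> G \<noteq> {} \<and> (0::real^'n) \<notin> G}"

definition gem_deg :: "(('n::finite \<Rightarrow> nat) \<Rightarrow> real) \<Rightarrow> ('n \<Rightarrow> nat) set" where
  "gem_deg c = {\<alpha> \<in> Vc c. \<exists>G\<in>Gfaces c. emb \<alpha> \<in> G}"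

definition even_mon :: "('n \<Rightarrow> nat) \<Rightarrow> bool" where
  "even_mon \<alpha> \<longleftrightarrow> (\<forall>i. even (\<alpha> i))"

definition C1 :: "(('n::finite \<Rightarrow> nat) \<Rightarrow> real) \<Rightarrow> bool" where
  "C1 c \<longleftrightarrow> (\<forall>\<alpha>\<in>Vv c. even_mon \<alpha>)"

definition C2 :: "(('n::finite \<Rightarrow> nat) \<Rightarrow> real) \<Rightarrow> bool" where
  "C2 c \<longleftrightarrow> (\<forall>\<alpha>\<in>Vv c. c \<alpha> > 0)"

definition C3 :: "(('n::finite \<Rightarrow> nat) \<Rightarrow> real) \<Rightarrow> bool" where
  "C3 c \<longleftrightarrow> (\<forall>i. \<exists>k::nat. k > 0 \<and> (\<lambda>j. if j = i then 2 * k else 0) \<in> Vv c)"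

text \<open>Map of minimal barycentric coordinates (only its values on V0^c x V0 matter).\<close>
definition bary_support ::
  "(('n::finite \<Rightarrow> nat) \<Rightarrow> real) \<Rightarrow> (('n \<Rightarrow> nat) \<Rightarrow> ('n \<Rightarrow> nat) \<Rightarrow> real) \<Rightarrow> ('n \<Rightarrow> nat) \<Rightarrow> ('n \<Rightarrow> nat) set" where
  "bary_support c lam a = {\<alpha> \<in> V0 c. lam a \<alpha> > 0}"

definition min_bary_map ::
  "(('n::finite \<Rightarrow> nat) \<Rightarrow> real) \<Rightarrow> (('n \<Rightarrow> nat) \<Rightarrow> ('n \<Rightarrow> nat) \<Rightarrow> real) \<Rightarrow> bool" where
  "min_bary_map c lam \<longleftrightarrow>
     (\<forall>a\<in>V0c c.
        (\<forall>\<alpha>\<in>V0 c. 0 \<le> lam a \<alpha> \<and> lam a \<alpha> \<le> 1) \<and>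
        \<not> affine_dependent (emb ` bary_support c lam a) \<and>
        (\<Sum>\<alpha>\<in>bary_support c lam a. lam a \<alpha>) = 1 \<and>
        (\<Sum>\<alpha>\<in>bary_support c lam a. lam a \<alpha> *\<^sub>R emb \<alpha>) = emb a)"

definition circuit_number ::
  "(('n::finite \<Rightarrow> nat) \<Rightarrow> real) \<Rightarrow> (('n \<Rightarrow> nat) \<Rightarrow> ('n \<Rightarrow> nat) \<Rightarrow> real) \<Rightarrow> ('n \<Rightarrow> nat) \<Rightarrow> real" where
  "circuit_number c lam a =
     (\<Prod>\<alpha>\<in>bary_support c lam a. (c \<alpha> / lam a \<alpha>) powr (lam a \<alpha>))"

end

theory Submission
  imports Defs
begin

text \<open>Write \<open>S(x) = \<Sum>\<^sub>\<alpha> f\<^sub>\<alpha> |x\<^sup>\<alpha>|\<close> over the nonzero vertices \<open>\<alpha>\<close>; by (C1) and (C2) this is the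
  vertex part of \<open>f\<close>, and \<open>S(x) \<ge> m (L(x) - 1)\<close> for the gauge \<open>L(x) = 1 + \<Sum>\<^sub>\<alpha> |x\<^sup>\<alpha>|\<close>.
  A gem degenerate exponent \<open>\<alpha>*\<close> lies on a face avoiding the origin, so its minimal barycentric
  coordinates only use nonzero vertices, and weighted AM-GM gives
  \<open>\<Theta>(f,\<lambda>,\<alpha>*) |x\<^sup>\<alpha>\<^sup>*| \<le> S(x)\<close>; hence the degenerate terms are at least \<open>-T S(x)\<close>, where
  \<open>T < 1\<close> is the sum in the hypothesis. Every other exponent \<open>\<beta>\<close> lies on no face avoiding the
  origin, so \<open>t \<beta>\<close> is still in the Newton polytope for some \<open>t > 1\<close> and \<open>|x\<^sup>\<beta>| \<le> L(x)\<^bsup>1/t\<^esup>\<close>.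
  Altogether \<open>f(x) \<ge> (1 - T) m (L(x) - 1) - K L(x)\<^sup>\<theta>\<close> with \<open>\<theta> < 1\<close>, and \<open>L(x) \<rightarrow> \<infinity>\<close> by (C3).\<close>

definition mon :: "real^'n::finite \<Rightarrow> ('n \<Rightarrow> nat) \<Rightarrow> real" where
  "mon x a = (\<Prod>i\<in>UNIV. (x$i) ^ a i)"

definition abs_mon :: "real^'n::finite \<Rightarrow> ('n \<Rightarrow> nat) \<Rightarrow> real" where
  "abs_mon x a = (\<Prod>i\<in>UNIV. \<bar>x$i\<bar> ^ a i)"

lemma peval_eq_sum_mon: "peval c x = (\<Sum>\<alpha>\<in>supp_poly c. c \<alpha> * mon x \<alpha>)"
  by (simp add: peval_def mon_def)

lemma abs_mon_nonneg: "0 \<le> abs_mon x a"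
  by (simp add: abs_mon_def prod_nonneg)

lemma abs_mon_eq_abs: "\<bar>mon x a\<bar> = abs_mon x a"
  by (simp add: mon_def abs_mon_def abs_prod power_abs)

lemma even_mon_eq_abs_mon: "even_mon a \<Longrightarrow> mon x a = abs_mon x a"
  by (simp add: mon_def abs_mon_def even_mon_def power_even_abs)

lemma mult_mon_ge: "- \<bar>k\<bar> * abs_mon x a \<le> k * mon x a"
proof -
  have "\<bar>k * mon x a\<bar> = \<bar>k\<bar> * abs_mon x a"
    by (simp add: abs_mult abs_mon_eq_abs)
  then show ?thesis
    by arith
qed

lemma abs_mon_eq_prod_powr:
  assumes "\<And>i. x$i = 0 \<Longrightarrow> a i = 0"
  shows "abs_mon x a = (\<Prod>i | x$i \<noteq> 0. \<bar>x$i\<bar> powr real (a i))"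
proof -
  have "abs_mon x a = (\<Prod>i | x$i \<noteq> 0. \<bar>x$i\<bar> ^ a i)"
    unfolding abs_mon_def by (rule prod.mono_neutral_right) (use assms in auto)
  then show ?thesis
    by (simp add: powr_realpow)
qed

text \<open>Zero coordinates need separate treatment since \<open>0 powr 0 = 0\<close> but \<open>0 ^ 0 = 1\<close>.\<close>
lemma abs_mon_convex_combination:
  fixes W :: "('n::finite \<Rightarrow> nat) set"
  assumes W: "finite W" and w_pos: "\<And>\<alpha>. \<alpha> \<in> W \<Longrightarrow> 0 < w \<alpha>"
    and a: "\<And>i. real (a i) = (\<Sum>\<alpha>\<in>W. w \<alpha> * real (\<alpha> i))"
  shows "abs_mon x a = (\<Prod>\<alpha>\<in>W. abs_mon x \<alpha> powr w \<alpha>)"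
proof (cases "\<exists>i. x$i = 0 \<and> 0 < a i")
  case True
  then obtain i where i: "x$i = 0" "0 < a i" by blast
  then have "(\<Sum>\<alpha>\<in>W. w \<alpha> * real (\<alpha> i)) \<noteq> 0"
    using a[of i] by simp
  then obtain \<alpha> where "\<alpha> \<in> W" "w \<alpha> * real (\<alpha> i) \<noteq> 0"
    by (meson sum.neutral)
  then have "abs_mon x \<alpha> = 0" "abs_mon x a = 0"
    using i by (auto simp: abs_mon_def prod_zero_iff)
  then show ?thesis
    using \<open>\<alpha> \<in> W\<close> W by (auto simp: prod_zero_iff)
next
  case False
  have vanish: "\<alpha> i = 0" if "\<alpha> \<in> W" "x$i = 0" for \<alpha> i
  proof -
    have "(\<Sum>\<alpha>\<in>W. w \<alpha> * real (\<alpha> i)) = 0"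
      using False that(2) a[of i] by simp
    then have "w \<alpha> * real (\<alpha> i) = 0"
      using that(1) W w_pos by (subst (asm) sum_nonneg_eq_0_iff) (auto simp: less_imp_le)
    then show ?thesis
      using w_pos[OF that(1)] by simp
  qed
  define J where "J = {i. x$i \<noteq> 0}"
  have "(\<Prod>\<alpha>\<in>W. abs_mon x \<alpha> powr w \<alpha>)
      = (\<Prod>\<alpha>\<in>W. \<Prod>i\<in>J. \<bar>x$i\<bar> powr (w \<alpha> * real (\<alpha> i)))"
    using vanish by (intro prod.cong refl)
      (simp add: abs_mon_eq_prod_powr J_def prod_powr_distrib powr_powr mult.commute)
  also have "\<dots> = (\<Prod>i\<in>J. \<bar>x$i\<bar> powr (\<Sum>\<alpha>\<in>W. w \<alpha> * real (\<alpha> i)))"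
    by (subst prod.swap) (auto simp: J_def powr_sum intro!: prod.cong)
  also have "\<dots> = abs_mon x a"
    using False by (simp add: abs_mon_eq_prod_powr J_def flip: a)
  finally show ?thesis ..
qed

lemma weighted_geometric_mean_le_arithmetic_mean:
  fixes y l :: "'a \<Rightarrow> real"
  assumes S: "finite S" "S \<noteq> {}" and l_pos: "\<And>i. i \<in> S \<Longrightarrow> 0 < l i"
    and l_sum: "(\<Sum>i\<in>S. l i) = 1" and y_nonneg: "\<And>i. i \<in> S \<Longrightarrow> 0 \<le> y i"
  shows "(\<Prod>i\<in>S. y i powr l i) \<le> (\<Sum>i\<in>S. l i * y i)"
proof (cases "\<exists>i\<in>S. y i = 0")
  case True
  then have "(\<Prod>i\<in>S. y i powr l i) = 0"
    using S by (auto simp: prod_zero_iff)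
  moreover have "0 \<le> (\<Sum>i\<in>S. l i * y i)"
    using l_pos y_nonneg by (intro sum_nonneg) (simp add: less_imp_le)
  ultimately show ?thesis by simp
next
  case False
  then have y_pos: "\<And>i. i \<in> S \<Longrightarrow> 0 < y i"
    using y_nonneg by (metis less_eq_real_def)
  have "(\<Sum>i\<in>S. l i * ln (y i)) \<le> ln (\<Sum>i\<in>S. l i *\<^sub>R y i)"
    by (rule concave_on_sum[OF S ln_concave l_sum]) (use l_pos y_pos in \<open>auto simp: less_imp_le\<close>)
  moreover have "0 < (\<Sum>i\<in>S. l i *\<^sub>R y i)"
    using S l_pos y_pos by (simp add: sum_pos)
  ultimately have "exp (\<Sum>i\<in>S. l i * ln (y i)) \<le> (\<Sum>i\<in>S. l i * y i)"
    using ln_ge_iff by auto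
  moreover have "exp (\<Sum>i\<in>S. l i * ln (y i)) = (\<Prod>i\<in>S. y i powr l i)"
    unfolding exp_sum[OF S(1)] by (intro prod.cong) (auto simp: powr_def mult.commute dest: y_pos)
  ultimately show ?thesis by simp
qed

text \<open>Weighted AM-GM applied to the terms \<open>k \<alpha> |x^\<alpha>| / l \<alpha>\<close>.\<close>
lemma circuit_inequality:
  fixes W :: "('n::finite \<Rightarrow> nat) set"
  assumes W: "finite W" and l_pos: "\<And>\<alpha>. \<alpha> \<in> W \<Longrightarrow> 0 < l \<alpha>" and l_sum: "(\<Sum>\<alpha>\<in>W. l \<alpha>) = 1"
    and a: "\<And>i. real (a i) = (\<Sum>\<alpha>\<in>W. l \<alpha> * real (\<alpha> i))"
    and k_nonneg: "\<And>\<alpha>. \<alpha> \<in> W \<Longrightarrow> 0 \<le> k \<alpha>"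
  shows "(\<Prod>\<alpha>\<in>W. (k \<alpha> / l \<alpha>) powr l \<alpha>) * abs_mon x a \<le> (\<Sum>\<alpha>\<in>W. k \<alpha> * abs_mon x \<alpha>)"
proof -
  have "W \<noteq> {}"
    using l_sum by auto
  have "(\<Prod>\<alpha>\<in>W. (k \<alpha> / l \<alpha>) powr l \<alpha>) * abs_mon x a
      = (\<Prod>\<alpha>\<in>W. (k \<alpha> / l \<alpha>) powr l \<alpha>) * (\<Prod>\<alpha>\<in>W. abs_mon x \<alpha> powr l \<alpha>)"
    by (simp only: abs_mon_convex_combination[OF W l_pos a])
  also have "\<dots> = (\<Prod>\<alpha>\<in>W. (k \<alpha> / l \<alpha> * abs_mon x \<alpha>) powr l \<alpha>)"
    by (simp only: powr_mult prod.distrib)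
  also have "\<dots> \<le> (\<Sum>\<alpha>\<in>W. l \<alpha> * (k \<alpha> / l \<alpha> * abs_mon x \<alpha>))"
    by (rule weighted_geometric_mean_le_arithmetic_mean[OF W \<open>W \<noteq> {}\<close> l_pos l_sum])
      (use l_pos k_nonneg in \<open>auto intro!: mult_nonneg_nonneg divide_nonneg_pos abs_mon_nonneg\<close>)
  also have "\<dots> = (\<Sum>\<alpha>\<in>W. k \<alpha> * abs_mon x \<alpha>)"
    using l_pos by (intro sum.cong) (auto simp: less_imp_neq[symmetric])
  finally show ?thesis .
qed

lemma abs_mon_le_powr:
  fixes W :: "('n::finite \<Rightarrow> nat) set"
  assumes W: "finite W" and w_pos: "\<And>\<alpha>. \<alpha> \<in> W \<Longrightarrow> 0 < w \<alpha>"
    and a: "\<And>i. real (a i) = (\<Sum>\<alpha>\<in>W. w \<alpha> * real (\<alpha> i))"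
    and w_sum: "(\<Sum>\<alpha>\<in>W. w \<alpha>) \<le> s" and L: "1 \<le> L" and bound: "\<And>\<alpha>. \<alpha> \<in> W \<Longrightarrow> abs_mon x \<alpha> \<le> L"
  shows "abs_mon x a \<le> L powr s"
proof -
  have "abs_mon x a = (\<Prod>\<alpha>\<in>W. abs_mon x \<alpha> powr w \<alpha>)"
    by (rule abs_mon_convex_combination[OF W w_pos a])
  also have "\<dots> \<le> (\<Prod>\<alpha>\<in>W. L powr w \<alpha>)"
    using w_pos bound by (intro prod_mono) (auto intro!: powr_mono2 simp: abs_mon_nonneg less_imp_le)
  also have "\<dots> = L powr (\<Sum>\<alpha>\<in>W. w \<alpha>)"
    using L by (simp add: powr_sum)
  also have "\<dots> \<le> L powr s"
    by (rule powr_mono[OF w_sum L])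
  finally show ?thesis .
qed

lemma emb_nth [simp]: "emb \<alpha> $ i = real (\<alpha> i)"
  by (simp add: emb_def)

lemma inj_emb: "inj emb"
  by (auto intro: injI simp: vec_eq_iff fun_eq_iff)

lemma emb_zero [simp]: "emb (\<lambda>_. 0) = 0"
  by (simp add: vec_eq_iff)

lemma emb_eq_0_iff [simp]: "emb \<alpha> = 0 \<longleftrightarrow> \<alpha> = (\<lambda>_. 0)"
  by (auto simp: vec_eq_iff fun_eq_iff)

lemma V0_subset: "V0 c \<subseteq> supp_poly c \<union> {(\<lambda>_. 0)}"
  by (auto simp: V0_def)

lemma Vv_subset_V0: "Vv c \<subseteq> V0 c"
  by (auto simp: Vv_def)

lemma Vv_subset_supp_poly: "Vv c \<subseteq> supp_poly c"
  using V0_subset[of c] by (auto simp: Vv_def)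

lemma finite_V0: "is_poly c \<Longrightarrow> finite (V0 c)"
  using V0_subset[of c] by (auto simp: is_poly_def intro: finite_subset)

lemma finite_Vv: "is_poly c \<Longrightarrow> finite (Vv c)"
  using finite_V0 Vv_subset_V0 by (rule finite_subset[rotated])

lemma emb_in_newton_inf: "\<alpha> \<in> supp_poly c \<union> {(\<lambda>_. 0)} \<Longrightarrow> emb \<alpha> \<in> newton_inf c"
  unfolding newton_inf_def by (rule hull_inc) auto

lemma zero_in_newton_inf: "0 \<in> newton_inf c"
  using emb_in_newton_inf[of "\<lambda>_. 0" c] by simp

lemma polytope_newton_inf: "is_poly c \<Longrightarrow> polytope (newton_inf c)"
  unfolding polytope_def newton_inf_def is_poly_def
  by (intro exI[of _ "emb ` (supp_poly c \<union> {(\<lambda>_. 0)})"]) auto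

lemma newton_inf_eq_hull_V0:
  assumes "is_poly c"
  shows "newton_inf c = convex hull (emb ` V0 c)"
proof -
  have "{x. x extreme_point_of newton_inf c} = emb ` V0 c"
  proof (intro equalityI subsetI)
    fix x assume "x \<in> {x. x extreme_point_of newton_inf c}"
    then have "x extreme_point_of newton_inf c" "x \<in> emb ` (supp_poly c \<union> {(\<lambda>_. 0)})"
      unfolding newton_inf_def using extreme_point_of_convex_hull by auto
    then show "x \<in> emb ` V0 c"
      by (auto simp: V0_def)
  qed (auto simp: V0_def)
  moreover have "compact (newton_inf c)"
    using assms unfolding newton_inf_def is_poly_def by (intro finite_imp_compact_convex_hull) auto
  ultimately show ?thesis
    using Krein_Milman_Minkowski[of "newton_inf c"] by (simp add: newton_inf_def)
qed

lemma min_bary_mapD: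
  assumes "min_bary_map c lam" and "a \<in> V0c c"
  shows "(\<Sum>\<alpha>\<in>bary_support c lam a. lam a \<alpha>) = 1"
    and "(\<Sum>\<alpha>\<in>bary_support c lam a. lam a \<alpha> *\<^sub>R emb \<alpha>) = emb a"
    and "\<And>i. real (a i) = (\<Sum>\<alpha>\<in>bary_support c lam a. lam a \<alpha> * real (\<alpha> i))"
proof -
  show sum: "(\<Sum>\<alpha>\<in>bary_support c lam a. lam a \<alpha> *\<^sub>R emb \<alpha>) = emb a"
    and "(\<Sum>\<alpha>\<in>bary_support c lam a. lam a \<alpha>) = 1"
    using assms unfolding min_bary_map_def by blast+
  show "real (a i) = (\<Sum>\<alpha>\<in>bary_support c lam a. lam a \<alpha> * real (\<alpha> i))" for i
    using arg_cong[OF sum, of "\<lambda>v. v $ i"] by simp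
qed

lemma convex_combination_on_supporting_hyperplane:
  fixes v :: "'a \<Rightarrow> 'b::real_inner"
  assumes W: "finite W" and l_pos: "\<And>\<beta>. \<beta> \<in> W \<Longrightarrow> 0 < l \<beta>" and l_sum: "(\<Sum>\<beta>\<in>W. l \<beta>) = 1"
    and le: "\<And>\<beta>. \<beta> \<in> W \<Longrightarrow> u \<bullet> v \<beta> \<le> b"
    and eq: "u \<bullet> (\<Sum>\<beta>\<in>W. l \<beta> *\<^sub>R v \<beta>) = b" and "\<beta> \<in> W"
  shows "u \<bullet> v \<beta> = b"
proof -
  have "(\<Sum>\<beta>\<in>W. l \<beta> * (b - u \<bullet> v \<beta>)) = (\<Sum>\<beta>\<in>W. l \<beta>) * b - u \<bullet> (\<Sum>\<beta>\<in>W. l \<beta> *\<^sub>R v \<beta>)"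
    by (simp add: algebra_simps sum_subtractf sum_distrib_left inner_sum_right)
  also have "\<dots> = 0"
    using l_sum eq by simp
  finally have "\<forall>\<beta>\<in>W. l \<beta> * (b - u \<bullet> v \<beta>) = 0"
    using l_pos le by (subst (asm) sum_nonneg_eq_0_iff[OF W]) (auto simp: less_imp_le)
  then show ?thesis
    using l_pos[OF \<open>\<beta> \<in> W\<close>] \<open>\<beta> \<in> W\<close> by force
qed

lemma polyhedron_stretch:
  fixes P :: "'a::euclidean_space set"
  assumes "polyhedron P" "0 \<in> P" "p \<in> P"
    and faces: "\<And>F. F face_of P \<Longrightarrow> p \<in> F \<Longrightarrow> 0 \<in> F"
  shows "\<exists>t>1. t *\<^sub>R p \<in> P"
proof -
  obtain H where H: "finite H" "P = \<Inter>H" "\<And>h. h \<in> H \<Longrightarrow> \<exists>a b. a \<noteq> 0 \<and> h = {x. a \<bullet> x \<le> b}"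
    using \<open>polyhedron P\<close> by (auto simp: polyhedron_def)
  have "eventually (\<lambda>t. t *\<^sub>R p \<in> h) (at_right 1)" if "h \<in> H" for h
  proof -
    obtain a b where h: "h = {x. a \<bullet> x \<le> b}"
      using H(3)[OF \<open>h \<in> H\<close>] by blast
    have P_le: "a \<bullet> x \<le> b" if "x \<in> P" for x
      using that \<open>h \<in> H\<close> H(2) h by blast
    show ?thesis
    proof (cases "a \<bullet> p < b")
      case True
      have "((\<lambda>t. t * (a \<bullet> p)) \<longlongrightarrow> 1 * (a \<bullet> p)) (at_right 1)"
        by (intro tendsto_intros)
      then have "eventually (\<lambda>t. t * (a \<bullet> p) < b) (at_right 1)"
        using True by (intro order_tendstoD(2)) auto
      then show ?thesis
        by eventually_elim (simp add: h)
    next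
      case False
      then have "a \<bullet> p = b"
        using P_le[OF \<open>p \<in> P\<close>] by simp
      have "P \<inter> {x. a \<bullet> x = b} face_of P"
        using polyhedron_imp_convex[OF \<open>polyhedron P\<close>] P_le
        by (intro face_of_Int_supporting_hyperplane_le) auto
      then have "0 \<in> P \<inter> {x. a \<bullet> x = b}"
        using faces \<open>p \<in> P\<close> \<open>a \<bullet> p = b\<close> by blast
      then have "b = 0"
        by simp
      then show ?thesis
        using \<open>a \<bullet> p = b\<close> by (simp add: h)
    qed
  qed
  then have "eventually (\<lambda>t. 1 < t \<and> (\<forall>h\<in>H. t *\<^sub>R p \<in> h)) (at_right (1::real))"
    using H(1) by (intro eventually_conj eventually_at_right_less eventually_ball_finite) auto
  then obtain t where "1 < t" "\<forall>h\<in>H. t *\<^sub>R p \<in> h"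
    using eventually_happens'[OF trivial_limit_at_right_real] by blast
  then show ?thesis
    using H(2) by auto
qed

lemma gem_deg_subset: "gem_deg c \<subseteq> supp_poly c - Vv c"
  by (auto simp: gem_deg_def Vc_def)

lemma gem_deg_subset_V0c: "gem_deg c \<subseteq> V0c c"
proof
  fix a assume a: "a \<in> gem_deg c"
  then obtain G where "G \<in> Gfaces c" "emb a \<in> G"
    by (auto simp: gem_deg_def)
  then have "a \<noteq> (\<lambda>_. 0)"
    by (auto simp: Gfaces_def)
  then show "a \<in> V0c c"
    using a by (auto simp: gem_deg_def Vc_def V0c_def Vv_def)
qed

text \<open>Every vertex with positive weight lies on the exposed face through \<open>a\<close>, which avoids
  the origin.\<close>
lemma bary_support_subset_Vv:
  assumes c: "is_poly c" and lam: "min_bary_map c lam" and a: "a \<in> gem_deg c"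
  shows "bary_support c lam a \<subseteq> Vv c"
proof
  fix \<alpha> assume \<alpha>: "\<alpha> \<in> bary_support c lam a"
  obtain G where G: "G \<in> Gfaces c" "emb a \<in> G"
    using a by (auto simp: gem_deg_def)
  have "G exposed_face_of newton_inf c"
    using G(1) exposed_face_of_polyhedron polytope_imp_polyhedron[OF polytope_newton_inf[OF c]]
    by (auto simp: Gfaces_def)
  then obtain u b where ub: "newton_inf c \<subseteq> {x. u \<bullet> x \<le> b}" "G = newton_inf c \<inter> {x. u \<bullet> x = b}"
    by (auto simp: exposed_face_of_def)
  have in_newton: "emb \<beta> \<in> newton_inf c" if "\<beta> \<in> bary_support c lam a" for \<beta>
    using that V0_subset by (intro emb_in_newton_inf) (auto simp: bary_support_def)
  have a_V0c: "a \<in> V0c c"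
    using a gem_deg_subset_V0c by blast
  have "u \<bullet> emb \<alpha> = b"
  proof (rule convex_combination_on_supporting_hyperplane[OF _ _ min_bary_mapD(1)[OF lam a_V0c]])
    show "finite (bary_support c lam a)"
      using finite_V0[OF c] by (simp add: bary_support_def)
    show "u \<bullet> (\<Sum>\<beta>\<in>bary_support c lam a. lam a \<beta> *\<^sub>R emb \<beta>) = b"
      using min_bary_mapD(2)[OF lam a_V0c] G(2) ub(2) by simp
  qed (use \<alpha> in_newton ub(1) in \<open>auto simp: bary_support_def\<close>)
  then have "emb \<alpha> \<in> G"
    using ub(2) in_newton[OF \<alpha>] by simp
  then have "\<alpha> \<noteq> (\<lambda>_. 0)"
    using G(1) by (auto simp: Gfaces_def)
  then show "\<alpha> \<in> Vv c"
    using \<alpha> by (auto simp: bary_support_def Vv_def)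
qed

lemma circuit_number_pos:
  assumes "is_poly c" "C2 c" "min_bary_map c lam" "a \<in> gem_deg c"
  shows "0 < circuit_number c lam a"
  unfolding circuit_number_def
  using bary_support_subset_Vv[OF assms(1,3,4)] assms(2)
  by (intro prod_pos) (fastforce simp: C2_def bary_support_def)

lemma circuit_number_mult_abs_mon_le:
  assumes c: "is_poly c" and C2: "C2 c" and lam: "min_bary_map c lam" and a: "a \<in> gem_deg c"
  shows "circuit_number c lam a * abs_mon x a \<le> (\<Sum>\<alpha>\<in>Vv c. c \<alpha> * abs_mon x \<alpha>)"
proof -
  define W where "W = bary_support c lam a"
  have W_Vv: "W \<subseteq> Vv c"
    unfolding W_def by (rule bary_support_subset_Vv[OF c lam a])
  have a_V0c: "a \<in> V0c c"
    using a gem_deg_subset_V0c by blast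
  have c_pos: "0 < c \<alpha>" if "\<alpha> \<in> Vv c" for \<alpha>
    using C2 that by (simp add: C2_def)
  have "circuit_number c lam a * abs_mon x a \<le> (\<Sum>\<alpha>\<in>W. c \<alpha> * abs_mon x \<alpha>)"
    unfolding circuit_number_def W_def
    using W_Vv c_pos finite_subset[OF W_Vv finite_Vv[OF c]] min_bary_mapD[OF lam a_V0c]
    by (intro circuit_inequality) (auto simp: W_def bary_support_def less_imp_le)
  also have "\<dots> \<le> (\<Sum>\<alpha>\<in>Vv c. c \<alpha> * abs_mon x \<alpha>)"
    using c_pos by (intro sum_mono2[OF finite_Vv[OF c] W_Vv]) (auto simp: abs_mon_nonneg less_imp_le)
  finally show ?thesis .
qed

lemma nondegenerate_exponent_stretch:
  assumes c: "is_poly c" and \<beta>: "\<beta> \<in> supp_poly c - Vv c - gem_deg c"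
  shows "\<exists>t>1. t *\<^sub>R emb \<beta> \<in> newton_inf c"
proof (rule polyhedron_stretch)
  show "polyhedron (newton_inf c)"
    by (rule polytope_imp_polyhedron[OF polytope_newton_inf[OF c]])
  show "emb \<beta> \<in> newton_inf c"
    using \<beta> by (intro emb_in_newton_inf) auto
  show "0 \<in> F" if "F face_of newton_inf c" "emb \<beta> \<in> F" for F
    using that \<beta> by (auto simp: gem_deg_def Gfaces_def Vc_def)
qed (rule zero_in_newton_inf)

text \<open>Dropping the weight of the vertex \<open>0\<close> leaves weights of sum at most 1, which are then
  rescaled by \<open>1 / t\<close>.\<close>
lemma stretched_exponent_weights:
  assumes c: "is_poly c" and "0 < t" and t_\<beta>: "t *\<^sub>R emb \<beta> \<in> newton_inf c"
  obtains W w where "W \<subseteq> Vv c" "\<And>\<alpha>. \<alpha> \<in> W \<Longrightarrow> 0 < w \<alpha>"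
    "\<And>i. real (\<beta> i) = (\<Sum>\<alpha>\<in>W. w \<alpha> * real (\<alpha> i))" "(\<Sum>\<alpha>\<in>W. w \<alpha>) \<le> 1 / t"
proof -
  have fin: "finite (V0 c)" "finite (Vv c)"
    using c by (simp_all add: finite_V0 finite_Vv)
  obtain u' where u': "\<forall>y\<in>emb ` V0 c. 0 \<le> u' y" "sum u' (emb ` V0 c) = 1"
    "(\<Sum>y\<in>emb ` V0 c. u' y *\<^sub>R y) = t *\<^sub>R emb \<beta>"
    using t_\<beta> unfolding newton_inf_eq_hull_V0[OF c] convex_hull_finite[OF finite_imageI[OF fin(1)]]
    by blast
  define u where "u \<alpha> = u' (emb \<alpha>)" for \<alpha>
  have inj: "inj_on emb (V0 c)"
    using inj_emb by (rule inj_on_subset) simp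
  have u_nonneg: "0 \<le> u \<alpha>" if "\<alpha> \<in> V0 c" for \<alpha>
    using u'(1) that by (simp add: u_def)
  have u_sum: "(\<Sum>\<alpha>\<in>V0 c. u \<alpha>) = 1" and u_comb: "(\<Sum>\<alpha>\<in>V0 c. u \<alpha> *\<^sub>R emb \<alpha>) = t *\<^sub>R emb \<beta>"
    using u'(2,3) by (simp_all add: sum.reindex[OF inj] u_def)
  define W where "W = {\<alpha>\<in>Vv c. 0 < u \<alpha>}"
  have W: "W \<subseteq> Vv c" "finite W"
    using fin by (auto simp: W_def)
  have u_vanish: "u \<alpha> = 0" if "\<alpha> \<in> V0 c - W" "\<alpha> \<noteq> (\<lambda>_. 0)" for \<alpha>
    using that u_nonneg by (force simp: W_def Vv_def)
  show ?thesis
  proof (rule that[of W "\<lambda>\<alpha>. u \<alpha> / t"])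
    show "W \<subseteq> Vv c" "\<And>\<alpha>. \<alpha> \<in> W \<Longrightarrow> 0 < u \<alpha> / t"
      using \<open>0 < t\<close> by (auto simp: W_def)
    show "real (\<beta> i) = (\<Sum>\<alpha>\<in>W. u \<alpha> / t * real (\<alpha> i))" for i
    proof -
      have "t * real (\<beta> i) = (\<Sum>\<alpha>\<in>V0 c. u \<alpha> * real (\<alpha> i))"
        using arg_cong[OF u_comb, of "\<lambda>v. v $ i"] by simp
      also have "\<dots> = (\<Sum>\<alpha>\<in>W. u \<alpha> * real (\<alpha> i))"
        using W Vv_subset_V0 u_vanish
        by (intro sum.mono_neutral_right[OF fin(1)]) auto
      finally have "real (\<beta> i) = (\<Sum>\<alpha>\<in>W. u \<alpha> * real (\<alpha> i)) / t"
        using \<open>0 < t\<close> by (simp add: field_simps)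
      then show ?thesis
        by (simp add: sum_divide_distrib)
    qed
    have "(\<Sum>\<alpha>\<in>W. u \<alpha>) \<le> (\<Sum>\<alpha>\<in>V0 c. u \<alpha>)"
      using W Vv_subset_V0 u_nonneg by (intro sum_mono2[OF fin(1)]) auto
    then show "(\<Sum>\<alpha>\<in>W. u \<alpha> / t) \<le> 1 / t"
      using u_sum \<open>0 < t\<close> by (simp add: divide_right_mono flip: sum_divide_distrib)
  qed
qed

definition vertex_gauge :: "(('n::finite \<Rightarrow> nat) \<Rightarrow> real) \<Rightarrow> real^'n \<Rightarrow> real" where
  "vertex_gauge c x = 1 + (\<Sum>\<alpha>\<in>Vv c. abs_mon x \<alpha>)"

lemma one_le_vertex_gauge: "1 \<le> vertex_gauge c x"
  by (simp add: vertex_gauge_def sum_nonneg abs_mon_nonneg)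

lemma abs_mon_le_vertex_gauge:
  assumes "is_poly c" "\<alpha> \<in> Vv c"
  shows "abs_mon x \<alpha> \<le> vertex_gauge c x"
proof -
  have "abs_mon x \<alpha> \<le> (\<Sum>\<alpha>\<in>Vv c. abs_mon x \<alpha>)"
    using assms by (intro member_le_sum) (simp_all add: abs_mon_nonneg finite_Vv)
  then show ?thesis
    by (simp add: vertex_gauge_def)
qed

lemma nondegenerate_abs_mon_le_vertex_gauge_powr:
  assumes c: "is_poly c" and \<beta>: "\<beta> \<in> supp_poly c - Vv c - gem_deg c"
  obtains \<theta> where "\<theta> < 1" "\<And>x. abs_mon x \<beta> \<le> vertex_gauge c x powr \<theta>"
proof -
  obtain t where "1 < t" "t *\<^sub>R emb \<beta> \<in> newton_inf c"
    using nondegenerate_exponent_stretch[OF assms] by blast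
  then obtain W w where W: "W \<subseteq> Vv c" "\<And>\<alpha>. \<alpha> \<in> W \<Longrightarrow> 0 < w \<alpha>"
    "\<And>i. real (\<beta> i) = (\<Sum>\<alpha>\<in>W. w \<alpha> * real (\<alpha> i))" "(\<Sum>\<alpha>\<in>W. w \<alpha>) \<le> 1 / t"
    using stretched_exponent_weights[OF c, of t \<beta>] by auto
  have "abs_mon x \<beta> \<le> vertex_gauge c x powr (1 / t)" for x
    using W(1) by (intro abs_mon_le_powr[OF finite_subset[OF W(1) finite_Vv[OF c]] W(2,3,4)
        one_le_vertex_gauge abs_mon_le_vertex_gauge[OF c]]) auto
  then show ?thesis
    using \<open>1 < t\<close> by (intro that[of "1 / t"]) auto
qed

lemma abs_le_vertex_gauge:
  assumes c: "is_poly c" and C3: "C3 c"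
  shows "\<bar>x$i\<bar> \<le> vertex_gauge c x"
proof (cases "1 \<le> \<bar>x$i\<bar>")
  case True
  obtain k :: nat where k: "0 < k" "(\<lambda>j. if j = i then 2 * k else 0) \<in> Vv c"
    using C3 by (auto simp: C3_def)
  have "abs_mon x (\<lambda>j. if j = i then 2 * k else 0) = \<bar>x$i\<bar> ^ (2 * k)"
    unfolding abs_mon_def by (subst prod.remove[of _ i]) (auto intro!: prod.neutral)
  moreover have "\<bar>x$i\<bar> ^ 1 \<le> \<bar>x$i\<bar> ^ (2 * k)"
    using True k(1) by (intro power_increasing) auto
  ultimately show ?thesis
    using abs_mon_le_vertex_gauge[OF c k(2), of x] by simp
next
  case False
  then show ?thesis
    using one_le_vertex_gauge[of c x] by simp
qed

lemma vertex_gauge_at_infinity: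
  fixes c :: "('n::finite \<Rightarrow> nat) \<Rightarrow> real"
  assumes "is_poly c" "C3 c"
  shows "filterlim (vertex_gauge c) at_top at_infinity"
  unfolding filterlim_at_top eventually_at_infinity
proof (intro allI exI impI)
  fix Z :: real and x :: "real^'n"
  assume Z: "Z * real CARD('n) \<le> norm x"
  have "norm x \<le> (\<Sum>i\<in>UNIV. \<bar>x$i\<bar>)"
    by (rule norm_le_l1_cart)
  also have "\<dots> \<le> real CARD('n) * vertex_gauge c x"
    using abs_le_vertex_gauge[OF assms] sum_mono[of UNIV "\<lambda>i. \<bar>x$i\<bar>" "\<lambda>_. vertex_gauge c x"] by simp
  finally have "Z * real CARD('n) \<le> vertex_gauge c x * real CARD('n)"
    using Z by (metis mult.commute order.trans)
  then show "Z \<le> vertex_gauge c x"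
    by simp
qed

lemma peval_split:
  assumes "is_poly c"
  shows "peval c x = (\<Sum>\<alpha>\<in>Vv c. c \<alpha> * mon x \<alpha>) + (\<Sum>a\<in>gem_deg c. c a * mon x a)
    + (\<Sum>\<beta>\<in>supp_poly c - Vv c - gem_deg c. c \<beta> * mon x \<beta>)"
proof -
  have fin: "finite (supp_poly c)"
    using assms by (simp add: is_poly_def)
  have "peval c x = (\<Sum>\<alpha>\<in>supp_poly c - Vv c. c \<alpha> * mon x \<alpha>) + (\<Sum>\<alpha>\<in>Vv c. c \<alpha> * mon x \<alpha>)"
    unfolding peval_eq_sum_mon by (rule sum.subset_diff[OF Vv_subset_supp_poly fin])
  also have "(\<Sum>\<alpha>\<in>supp_poly c - Vv c. c \<alpha> * mon x \<alpha>)
      = (\<Sum>\<beta>\<in>supp_poly c - Vv c - gem_deg c. c \<beta> * mon x \<beta>) + (\<Sum>a\<in>gem_deg c. c a * mon x a)"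
    using fin by (intro sum.subset_diff[OF gem_deg_subset]) simp
  finally show ?thesis
    by simp
qed

lemma vertex_part_eq:
  assumes "C1 c"
  shows "(\<Sum>\<alpha>\<in>Vv c. c \<alpha> * mon x \<alpha>) = (\<Sum>\<alpha>\<in>Vv c. c \<alpha> * abs_mon x \<alpha>)"
  using assms by (intro sum.cong) (auto simp: C1_def even_mon_eq_abs_mon)

lemma vertex_part_ge:
  assumes "is_poly c" "C2 c"
  obtains m where "0 < m" "\<And>x. m * (vertex_gauge c x - 1) \<le> (\<Sum>\<alpha>\<in>Vv c. c \<alpha> * abs_mon x \<alpha>)"
proof
  define m where "m = Min (insert 1 (c ` Vv c))"
  show "0 < m"
    using assms by (auto simp: m_def C2_def finite_Vv)
  have "m \<le> c \<alpha>" if "\<alpha> \<in> Vv c" for \<alpha>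
    using assms(1) that by (simp add: m_def finite_Vv)
  then show "m * (vertex_gauge c x - 1) \<le> (\<Sum>\<alpha>\<in>Vv c. c \<alpha> * abs_mon x \<alpha>)" for x
    by (simp add: vertex_gauge_def sum_distrib_left sum_mono mult_right_mono abs_mon_nonneg)
qed

definition circuit_weight ::
  "(('n::finite \<Rightarrow> nat) \<Rightarrow> real) \<Rightarrow> (('n \<Rightarrow> nat) \<Rightarrow> ('n \<Rightarrow> nat) \<Rightarrow> real) \<Rightarrow> ('n \<Rightarrow> nat) \<Rightarrow> real" where
  "circuit_weight c lam a =
     (if even_mon a then - min 0 (c a) else \<bar>c a\<bar>) / circuit_number c lam a"

lemma sum_circuit_weight:
  assumes "is_poly c"
  shows "(\<Sum>a\<in>gem_deg c. circuit_weight c lam a)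
    = (\<Sum>a\<in>gem_deg c \<inter> {a. \<not> even_mon a}. \<bar>c a\<bar> / circuit_number c lam a)
      - (\<Sum>a\<in>gem_deg c \<inter> {a. even_mon a}. min 0 (c a) / circuit_number c lam a)"
proof -
  have "finite (gem_deg c)"
    using assms gem_deg_subset by (auto simp: is_poly_def intro: finite_subset)
  then have "(\<Sum>a\<in>gem_deg c. circuit_weight c lam a)
      = (\<Sum>a\<in>gem_deg c \<inter> {a. even_mon a}. circuit_weight c lam a)
        + (\<Sum>a\<in>gem_deg c - {a. even_mon a}. circuit_weight c lam a)"
    by (rule sum.Int_Diff)
  also have "gem_deg c - {a. even_mon a} = gem_deg c \<inter> {a. \<not> even_mon a}"
    by auto
  finally show ?thesis
    by (simp add: circuit_weight_def sum_negf[symmetric])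
qed

lemma gem_deg_part_ge:
  assumes c: "is_poly c" and C2: "C2 c" and lam: "min_bary_map c lam"
  shows "- (\<Sum>a\<in>gem_deg c. circuit_weight c lam a) * (\<Sum>\<alpha>\<in>Vv c. c \<alpha> * abs_mon x \<alpha>)
    \<le> (\<Sum>a\<in>gem_deg c. c a * mon x a)"
proof -
  have "- circuit_weight c lam a * (\<Sum>\<alpha>\<in>Vv c. c \<alpha> * abs_mon x \<alpha>) \<le> c a * mon x a"
    if a: "a \<in> gem_deg c" for a
  proof -
    define k where "k = (if even_mon a then - min 0 (c a) else \<bar>c a\<bar>)"
    have "0 \<le> k"
      by (simp add: k_def)
    have \<Theta>: "0 < circuit_number c lam a"
      by (rule circuit_number_pos[OF c C2 lam a])
    have "- k * abs_mon x a \<le> c a * mon x a"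
      using mult_mon_ge[of "c a" x a] mult_right_mono[OF min.cobounded2 abs_mon_nonneg]
      by (auto simp: k_def even_mon_eq_abs_mon)
    moreover have "k * abs_mon x a
        = circuit_weight c lam a * (circuit_number c lam a * abs_mon x a)"
      using \<Theta> by (simp add: circuit_weight_def k_def)
    moreover have "\<dots> \<le> circuit_weight c lam a * (\<Sum>\<alpha>\<in>Vv c. c \<alpha> * abs_mon x \<alpha>)"
      using \<open>0 \<le> k\<close> \<Theta>
      by (intro mult_left_mono circuit_number_mult_abs_mon_le[OF c C2 lam a])
        (simp add: circuit_weight_def k_def)
    ultimately show ?thesis
      by linarith
  qed
  then show ?thesis
    unfolding sum_distrib_right sum_negf[symmetric] mult_minus_left by (rule sum_mono)
qed

lemma nondegenerate_part_ge:
  assumes c: "is_poly c"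
  obtains K \<theta> where "\<theta> < 1"
    "\<And>x. - K * vertex_gauge c x powr \<theta> \<le> (\<Sum>\<beta>\<in>supp_poly c - Vv c - gem_deg c. c \<beta> * mon x \<beta>)"
proof -
  define R where "R = supp_poly c - Vv c - gem_deg c"
  have "finite R"
    using c by (simp add: R_def is_poly_def)
  have "\<forall>\<beta>\<in>R. \<exists>\<theta>. \<theta> < 1 \<and> (\<forall>x. abs_mon x \<beta> \<le> vertex_gauge c x powr \<theta>)"
    using nondegenerate_abs_mon_le_vertex_gauge_powr[OF c] unfolding R_def by blast
  then obtain \<theta>\<^sub>\<beta> where \<theta>\<^sub>\<beta>: "\<And>\<beta>. \<beta> \<in> R \<Longrightarrow> \<theta>\<^sub>\<beta> \<beta> < 1 \<and> (\<forall>x. abs_mon x \<beta> \<le> vertex_gauge c x powr \<theta>\<^sub>\<beta> \<beta>)"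
    by (metis bchoice)
  define \<theta> where "\<theta> = Max (insert 0 (\<theta>\<^sub>\<beta> ` R))"
  have "\<theta> < 1"
    using \<open>finite R\<close> \<theta>\<^sub>\<beta> by (simp add: \<theta>_def)
  have "- \<bar>c \<beta>\<bar> * vertex_gauge c x powr \<theta> \<le> c \<beta> * mon x \<beta>" if "\<beta> \<in> R" for \<beta> x
  proof -
    have "abs_mon x \<beta> \<le> vertex_gauge c x powr \<theta>\<^sub>\<beta> \<beta>"
      using \<theta>\<^sub>\<beta>[OF that] by blast
    also have "\<dots> \<le> vertex_gauge c x powr \<theta>"
      using \<open>finite R\<close> that by (intro powr_mono one_le_vertex_gauge) (simp add: \<theta>_def)
    finally show ?thesis
      using mult_mon_ge[of "c \<beta>" x \<beta>] mult_left_mono[of _ _ "\<bar>c \<beta>\<bar>"] by fastforce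
  qed
  then have "- (\<Sum>\<beta>\<in>R. \<bar>c \<beta>\<bar>) * vertex_gauge c x powr \<theta> \<le> (\<Sum>\<beta>\<in>R. c \<beta> * mon x \<beta>)" for x
    unfolding sum_distrib_right sum_negf[symmetric] mult_minus_left by (intro sum_mono)
  then show ?thesis
    unfolding R_def by (rule that[OF \<open>\<theta> < 1\<close>])
qed

lemma filterlim_linear_minus_sublinear:
  fixes A K \<theta> :: real
  assumes "0 < A" "\<theta> < 1"
  shows "filterlim (\<lambda>L. A * (L - 1) - K * L powr \<theta>) at_top at_top"
proof -
  have "((\<lambda>L. A - K * L powr (\<theta> - 1)) \<longlongrightarrow> A - K * 0) at_top"
    using assms by (intro tendsto_intros tendsto_neg_powr filterlim_ident) auto
  then have "filterlim (\<lambda>L. (A - K * L powr (\<theta> - 1)) * L) at_top at_top"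
    using assms by (intro filterlim_tendsto_pos_mult_at_top filterlim_ident) auto
  then have "filterlim (\<lambda>L. - A + (A - K * L powr (\<theta> - 1)) * L) at_top at_top"
    by (rule filterlim_tendsto_add_at_top[OF tendsto_const])
  moreover have "eventually (\<lambda>L. - A + (A - K * L powr (\<theta> - 1)) * L = A * (L - 1) - K * L powr \<theta>) at_top"
    using eventually_gt_at_top[of 0]
    by eventually_elim (simp add: algebra_simps powr_diff)
  ultimately show ?thesis
    using filterlim_cong by fastforce
qed

theorem mainTheorem3:
  fixes c :: "('n::finite \<Rightarrow> nat) \<Rightarrow> real"
    and lam :: "('n \<Rightarrow> nat) \<Rightarrow> ('n \<Rightarrow> nat) \<Rightarrow> real"
  assumes "is_poly c" and "C1 c" and "C2 c" and "C3 c"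
    and "min_bary_map c lam"
    and "(\<Sum>a\<in>gem_deg c \<inter> {a. \<not> even_mon a}. \<bar>c a\<bar> / circuit_number c lam a)
         - (\<Sum>a\<in>gem_deg c \<inter> {a. even_mon a}. min 0 (c a) / circuit_number c lam a) < 1"
  shows "filterlim (peval c) at_top at_infinity"
proof -
  define T where "T = (\<Sum>a\<in>gem_deg c. circuit_weight c lam a)"
  have "T < 1"
    using assms(6) sum_circuit_weight[OF assms(1)] by (simp add: T_def)
  obtain m where m: "0 < m" "\<And>x. m * (vertex_gauge c x - 1) \<le> (\<Sum>\<alpha>\<in>Vv c. c \<alpha> * abs_mon x \<alpha>)"
    using vertex_part_ge[OF assms(1,3)] by blast
  obtain K \<theta> where "\<theta> < 1"
    and K: "\<And>x. - K * vertex_gauge c x powr \<theta> \<le> (\<Sum>\<beta>\<in>supp_poly c - Vv c - gem_deg c. c \<beta> * mon x \<beta>)"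
    using nondegenerate_part_ge[OF assms(1)] by blast
  have lower: "(1 - T) * m * (vertex_gauge c x - 1) - K * vertex_gauge c x powr \<theta> \<le> peval c x" for x
    using peval_split[OF assms(1)] vertex_part_eq[OF assms(2)] K[of x]
      gem_deg_part_ge[OF assms(1,3,5), of x] mult_left_mono[OF m(2), of "1 - T" x] \<open>T < 1\<close>
    by (simp add: T_def algebra_simps)
  have "filterlim (\<lambda>x. (1 - T) * m * (vertex_gauge c x - 1) - K * vertex_gauge c x powr \<theta>)
      at_top at_infinity"
    using \<open>T < 1\<close> m(1) \<open>\<theta> < 1\<close>
    by (intro filterlim_compose[OF filterlim_linear_minus_sublinear vertex_gauge_at_infinity[OF assms(1,4)]]) auto
  then show ?thesis
    by (rule filterlim_at_top_mono) (simp add: lower)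
qed

end
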